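(* Let $R=(V,(\rho_i)_{i\in I})$ be a relational structure and $A\subseteq V$. Then: (1) for every monomorphic decomposition $(V_j)_{j\in J}$ of $R$, the non-empty sets among $A\cap V_j$ ($j\in J$) form a monomorphic decomposition of $R_{\restriction A}$; (2) if $R$ has a monomorphic decomposition into finitely many classes and $R$ embeds into $R_{\restriction A}$, then for each class $C$ of $\mathbf M(R)$, the set $A\cap C$ is a class of $\mathbf M(R_{\restriction A})$ and $|A\cap C|=|C|$.
   Context: A relational structure $R=(V,(\rho_i)_{i\in I})$ consists of a set $V$ and relations $\rho_i\subseteq V^{n_i}$, $n_i$ non-negative integers. For $A\subseteq V$, $R_{\restriction A}=(A,(\rho_i\cap A^{n_i})_{i\in I})$. An isomorphism between structures with the same signature is a bijection preserving each relation in both directions; $R$ embeds into $R'$ if $R$ is isomorphic to a restriction of $R'$. A monomorphic decomposition of $R$ is a partition $(V_j)_{j\in J}$ of $V$ into non-empty sets such that for all finite $F,F'\subseteq V$ with $|F\cap V_j|=|F'\cap V_j|$ for every $j\in J$, the restrictions $R_{\restriction F}$ and $R_{\restriction F'}$ are isomorphic. For $x,y\in V$ write $x\simeq_R y$ if for every finite $F\subseteq V\setminus\{x,y\}$ the restrictions $R_{\restriction F\cup\{x\}}$ and $R_{\restriction F\cup\{y\}}$ are isomorphic. It is known that $\simeq_R$ is an equivalence relation whose classes form a monomorphic decomposition of $R$ of which every monomorphic decomposition of $R$ is a refinement; this partition is the canonical decomposition $\mathbf M(R)$. *)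

theory Defs
  imports Main "HOL-Library.Equipollence"
begin

text \<open>A relational structure R = (V, (rho_i)_{i in I}) with signature n :: 'i => nat
  (arity of each relation) is represented by its domain V, the family rho of relations,
  each rho i being a set of lists (tuples) of length n i over V.\<close>

definition rel_struct :: "'a set \<Rightarrow> ('i \<Rightarrow> 'a list set) \<Rightarrow> ('i \<Rightarrow> nat) \<Rightarrow> bool" where
  "rel_struct V \<rho> n \<longleftrightarrow> (\<forall>i. \<forall>xs\<in>\<rho> i. length xs = n i \<and> set xs \<subseteq> V)"

definition restr_rel :: "('i \<Rightarrow> 'a list set) \<Rightarrow> 'a set \<Rightarrow> ('i \<Rightarrow> 'a list set)" where
  "restr_rel \<rho> A = (\<lambda>i. {xs \<in> \<rho> i. set xs \<subseteq> A})"

definition struct_iso_by ::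
  "('a \<Rightarrow> 'b) \<Rightarrow> ('i \<Rightarrow> nat) \<Rightarrow> 'a set \<Rightarrow> ('i \<Rightarrow> 'a list set) \<Rightarrow> 'b set \<Rightarrow> ('i \<Rightarrow> 'b list set) \<Rightarrow> bool" where
  "struct_iso_by f n V \<rho> V' \<rho>' \<longleftrightarrow> bij_betw f V V' \<and>
     (\<forall>i xs. length xs = n i \<and> set xs \<subseteq> V \<longrightarrow> (xs \<in> \<rho> i \<longleftrightarrow> map f xs \<in> \<rho>' i))"

definition struct_iso ::
  "('i \<Rightarrow> nat) \<Rightarrow> 'a set \<Rightarrow> ('i \<Rightarrow> 'a list set) \<Rightarrow> 'b set \<Rightarrow> ('i \<Rightarrow> 'b list set) \<Rightarrow> bool" where
  "struct_iso n V \<rho> V' \<rho>' \<longleftrightarrow> (\<exists>f. struct_iso_by f n V \<rho> V' \<rho>')"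

definition struct_embeds ::
  "('i \<Rightarrow> nat) \<Rightarrow> 'a set \<Rightarrow> ('i \<Rightarrow> 'a list set) \<Rightarrow> 'b set \<Rightarrow> ('i \<Rightarrow> 'b list set) \<Rightarrow> bool" where
  "struct_embeds n V \<rho> V' \<rho>' \<longleftrightarrow> (\<exists>B \<subseteq> V'. struct_iso n V \<rho> B (restr_rel \<rho>' B))"

text \<open>Monomorphic decomposition, given as the set P of its (non-empty, pairwise disjoint) blocks.\<close>
definition monomorphic_decomp ::
  "('i \<Rightarrow> nat) \<Rightarrow> 'a set \<Rightarrow> ('i \<Rightarrow> 'a list set) \<Rightarrow> 'a set set \<Rightarrow> bool" where
  "monomorphic_decomp n V \<rho> P \<longleftrightarrow>
     \<Union>P = V \<and> {} \<notin> P \<and> (\<forall>B\<in>P. \<forall>B'\<in>P. B \<noteq> B' \<longrightarrow> B \<inter> B' = {}) \<and>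
     (\<forall>F F'. finite F \<and> finite F' \<and> F \<subseteq> V \<and> F' \<subseteq> V \<and>
        (\<forall>B\<in>P. card (F \<inter> B) = card (F' \<inter> B)) \<longrightarrow>
        struct_iso n F (restr_rel \<rho> F) F' (restr_rel \<rho> F'))"

definition equiv_R :: "('i \<Rightarrow> nat) \<Rightarrow> 'a set \<Rightarrow> ('i \<Rightarrow> 'a list set) \<Rightarrow> 'a \<Rightarrow> 'a \<Rightarrow> bool" where
  "equiv_R n V \<rho> x y \<longleftrightarrow>
     (\<forall>F. finite F \<and> F \<subseteq> V - {x, y} \<longrightarrow>
        struct_iso n (F \<union> {x}) (restr_rel \<rho> (F \<union> {x})) (F \<union> {y}) (restr_rel \<rho> (F \<union> {y})))"

definition canonical_decomp :: "('i \<Rightarrow> nat) \<Rightarrow> 'a set \<Rightarrow> ('i \<Rightarrow> 'a list set) \<Rightarrow> 'a set set" where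
  "canonical_decomp n V \<rho> = V // {(x, y). x \<in> V \<and> y \<in> V \<and> equiv_R n V \<rho> x y}"

end

theory Submission
  imports Defs "HOL-Combinatorics.Permutations"
begin

(* Write ~ for the relation of the canonical decomposition and suppose R is isomorphic to R|B
  with B \<subseteq> A.  An isomorphism witnessing x ~R y also witnesses x ~(R|A) y, so the traces
  on A of the classes of ~R refine the classes of ~(R|A), and likewise from A to B.  Counting
  classes gives |M(R)| \<ge> |M(R|A)| \<ge> |M(R|B)| = |M(R)|, where M(R) is finite because a finite
  monomorphic decomposition refines it.  Hence all refinements are equalities: every class C
  of M(R) meets A, A \<inter> C is a class of M(R|A), and ~(R|B) is the restriction of ~R.
  The last fact makes the embedding f of R onto R|B send classes into classes, inducing an
  injective, hence bijective, self-map tau of the finite set M(R) with |D| \<le> |tau D|.  Going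
  around a cycle of tau shows |tau D| = |D|, so C = tau D injects via f into C \<inter> B \<subseteq> A \<inter> C. *)

section \<open>Equivalence relations on a set and on a subset\<close>

lemma Image_Int_class_eq:
  assumes r: "equiv X r" and s: "equiv Y s" and "Y \<subseteq> X" and rs: "Restr r Y \<subseteq> s"
    and y: "y \<in> Y"
  shows "s `` (Y \<inter> r `` {y}) = s `` {y}"
proof
  show "s `` {y} \<subseteq> s `` (Y \<inter> r `` {y})"
    using y \<open>Y \<subseteq> X\<close> equiv_class_self[OF r] by blast
  show "s `` (Y \<inter> r `` {y}) \<subseteq> s `` {y}"
  proof
    fix w assume "w \<in> s `` (Y \<inter> r `` {y})"
    then obtain z where z: "z \<in> Y" "(y, z) \<in> r" "(z, w) \<in> s" by blast
    then have "(y, z) \<in> s" using rs y by blast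
    with z(3) show "w \<in> s `` {y}" using s by (blast elim: equivE dest: transD)
  qed
qed

lemma quotient_subset_image_Int:
  assumes "equiv X r" "equiv Y s" "Y \<subseteq> X" "Restr r Y \<subseteq> s"
  shows "Y // s \<subseteq> (\<lambda>C. s `` (Y \<inter> C)) ` (X // r)"
proof
  fix D assume "D \<in> Y // s"
  then obtain y where y: "y \<in> Y" "D = s `` {y}" by (rule quotientE)
  then have "D = s `` (Y \<inter> r `` {y})" using Image_Int_class_eq[OF assms] by simp
  moreover have "r `` {y} \<in> X // r" using y \<open>Y \<subseteq> X\<close> by (blast intro: quotientI)
  ultimately show "D \<in> (\<lambda>C. s `` (Y \<inter> C)) ` (X // r)" by blast
qed

lemma card_quotient_le:
  assumes "equiv X r" "equiv Y s" "Y \<subseteq> X" "Restr r Y \<subseteq> s" "finite (X // r)"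
  shows "finite (Y // s)" "card (Y // s) \<le> card (X // r)"
proof -
  note sub = quotient_subset_image_Int[OF assms(1-4)]
  show "finite (Y // s)" using sub assms(5) by (rule finite_subset[OF _ finite_imageI])
  show "card (Y // s) \<le> card (X // r)"
    using card_mono[OF finite_imageI[OF assms(5)] sub] card_image_le[OF assms(5), of "\<lambda>C. s `` (Y \<inter> C)"]
    by linarith
qed

lemma quotient_Int_if_card_quotient_eq:
  assumes r: "equiv X r" and s: "equiv Y s" and "Y \<subseteq> X" and rs: "Restr r Y \<subseteq> s"
    and fin: "finite (X // r)" and card: "card (Y // s) = card (X // r)"
  shows "s = Restr r Y" and "C \<in> X // r \<Longrightarrow> Y \<inter> C \<in> Y // s"
proof -
  define g where "g C = s `` (Y \<inter> C)" for C
  have sub: "Y // s \<subseteq> g ` (X // r)"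
    unfolding g_def by (rule quotient_subset_image_Int[OF r s \<open>Y \<subseteq> X\<close> rs])
  have "card (g ` (X // r)) \<le> card (Y // s)" using card card_image_le[OF fin] by simp
  then have img: "g ` (X // r) = Y // s" using card_seteq[OF finite_imageI[OF fin] sub] by simp
  have inj: "inj_on g (X // r)" using card img eq_card_imp_inj_on[OF fin, of g] by simp
  have meets: "\<exists>y \<in> Y. C = r `` {y}" if C: "C \<in> X // r" for C
  proof -
    have "g C \<noteq> {}" using img C in_quotient_imp_non_empty[OF s] by blast
    then obtain y where y: "y \<in> Y" "y \<in> C" unfolding g_def by blast
    obtain x where "x \<in> X" "C = r `` {x}" using C by (rule quotientE)
    with y have "C = r `` {y}" using r by (metis Image_singleton_iff equiv_class_eq)
    with y show ?thesis by blast
  qed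
  have g_class: "g (r `` {y}) = s `` {y}" if "y \<in> Y" for y
    unfolding g_def using Image_Int_class_eq[OF r s \<open>Y \<subseteq> X\<close> rs that] .
  show s_eq: "s = Restr r Y"
  proof
    show "s \<subseteq> Restr r Y"
    proof
      fix p assume "p \<in> s"
      then obtain y z where p: "p = (y, z)" "y \<in> Y" "z \<in> Y" "(y, z) \<in> s"
        using equiv_type[OF s] by force
      then have gyz: "g (r `` {y}) = g (r `` {z})" using g_class s by (simp add: equiv_class_eq)
      have cls: "r `` {y} \<in> X // r" "r `` {z} \<in> X // r"
        using p \<open>Y \<subseteq> X\<close> by (auto intro: quotientI)
      have "r `` {y} = r `` {z}" using inj_onD[OF inj gyz cls] .
      then have "(y, z) \<in> r" using p \<open>Y \<subseteq> X\<close> eq_equiv_class_iff[OF r] by blast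
      with p show "p \<in> Restr r Y" by blast
    qed
  qed (rule rs)
  show "Y \<inter> C \<in> Y // s" if C: "C \<in> X // r"
  proof -
    obtain y where y: "y \<in> Y" "C = r `` {y}" using meets[OF C] by blast
    have "Y \<inter> C = s `` {y}" using y s_eq by blast
    then show ?thesis using y(1) by (simp add: quotientI)
  qed
qed

lemma finite_quotient_if_blocks_in_classes:
  assumes r: "equiv X r" and "\<Union>P = X" "finite P" and blocks: "\<And>B. B \<in> P \<Longrightarrow> B \<times> B \<subseteq> r"
  shows "finite (X // r)"
proof (rule finite_subset[OF _ finite_imageI[OF \<open>finite P\<close>]])
  show "X // r \<subseteq> (\<lambda>B. r `` B) ` P"
  proof
    fix C assume "C \<in> X // r"
    then obtain x where "x \<in> X" "C = r `` {x}" by (rule quotientE)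
    then obtain B where B: "B \<in> P" "x \<in> B" using \<open>\<Union>P = X\<close> by blast
    have "r `` B = r `` {x}"
      using B blocks[OF B(1)] r by (auto simp: equiv_class_eq_iff)
    then show "C \<in> (\<lambda>B. r `` B) ` P" using B \<open>C = r `` {x}\<close> by blast
  qed
qed

lemma card_quotient_eq_if_bij_betw:
  assumes f: "bij_betw f X Y" and r: "equiv X r" and s: "equiv Y s"
    and rs: "\<And>x y. x \<in> X \<Longrightarrow> y \<in> X \<Longrightarrow> (f x, f y) \<in> s \<longleftrightarrow> (x, y) \<in> r"
  shows "card (Y // s) = card (X // r)"
proof -
  have image_class: "f ` (r `` {x}) = s `` {f x}" if "x \<in> X" for x
  proof
    show "f ` (r `` {x}) \<subseteq> s `` {f x}" using rs that equiv_type[OF r] by blast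
    show "s `` {f x} \<subseteq> f ` (r `` {x})"
    proof
      fix w assume "w \<in> s `` {f x}"
      then obtain z where "z \<in> X" "w = f z" "(f x, f z) \<in> s"
        using equiv_type[OF s] f by (auto simp: bij_betw_def)
      then show "w \<in> f ` (r `` {x})" using rs that by blast
    qed
  qed
  have "Y // s = (\<lambda>C. f ` C) ` (X // r)"
    unfolding quotient_def using image_class f by (auto simp: bij_betw_def)
  moreover have "X // r \<subseteq> Pow X" using Union_quotient[OF r] by blast
  then have "inj_on (\<lambda>C. f ` C) (X // r)"
    by (rule inj_on_subset[OF inj_on_image_Pow[OF bij_betw_imp_inj_on[OF f]]])
  ultimately show ?thesis by (simp add: card_image)
qed

lemma lepoll_reverse_if_finite_permutation:
  assumes "finite S" "inj_on \<tau> S" "\<tau> ` S \<subseteq> S" and mono: "\<And>E. E \<in> S \<Longrightarrow> E \<lesssim> \<tau> E" and "E \<in> S"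
  shows "\<tau> E \<lesssim> E"
proof -
  define \<pi> where "\<pi> D = (if D \<in> S then \<tau> D else D)" for D
  have "\<tau> ` S = S" using endo_inj_surj assms(1-3) by blast
  then have "bij_betw \<pi> S S"
    using assms(2) unfolding \<pi>_def bij_betw_def by (simp cong: inj_on_cong image_cong)
  then have \<pi>: "\<pi> permutes S" by (rule bij_imp_permutes) (simp add: \<pi>_def)
  have "permutation \<pi>" using \<open>finite S\<close> \<pi> permutation_permutes by blast
  then obtain m where "m > 0" "(\<pi> ^^ m) E = E" by (rule permutation_self)
  moreover have "(\<pi> ^^ (m - 1)) (\<pi> E) = (\<pi> ^^ m) E"
    using \<open>m > 0\<close> by (metis Suc_diff_1 funpow_Suc_right o_apply)
  ultimately have cycle: "(\<pi> ^^ (m - 1)) (\<tau> E) = E" using \<open>E \<in> S\<close> by (simp add: \<pi>_def)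
  have "F \<lesssim> (\<pi> ^^ k) F" if "F \<in> S" for F k
  proof (induction k)
    case (Suc k)
    have "(\<pi> ^^ k) F \<in> S" using permutes_in_funpow_image[OF \<pi> that] .
    then have "(\<pi> ^^ k) F \<lesssim> (\<pi> ^^ Suc k) F" using mono by (simp add: \<pi>_def)
    with Suc.IH show ?case by (rule lepoll_trans)
  qed simp
  from this[of "\<tau> E" "m - 1"] show ?thesis using cycle assms(3,5) by auto
qed

lemma class_lepoll_Int_image:
  assumes r: "equiv X r" "finite (X // r)" and f: "inj_on f X" "f ` X \<subseteq> X"
    and reflects: "\<And>x y. x \<in> X \<Longrightarrow> y \<in> X \<Longrightarrow> (f x, f y) \<in> r \<longleftrightarrow> (x, y) \<in> r"
    and C: "C \<in> X // r"
  shows "C \<lesssim> C \<inter> f ` X"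
proof -
  define \<tau> where "\<tau> D = r `` (f ` D)" for D
  have image_class: "f ` (r `` {x}) \<subseteq> r `` {f x}" if "x \<in> X" for x
    using that reflects equiv_type[OF r(1)] by blast
  have \<tau>_class: "\<tau> (r `` {x}) = r `` {f x}" if "x \<in> X" for x
  proof
    show "r `` {f x} \<subseteq> \<tau> (r `` {x})"
      unfolding \<tau>_def using that equiv_class_self[OF r(1)] by blast
    have "\<tau> (r `` {x}) \<subseteq> r `` (r `` {f x})"
      unfolding \<tau>_def using image_class[OF that] by (rule Image_mono[OF order_refl])
    also have "\<dots> = r `` {f x}" by (rule refines_equiv_class_eq[OF order_refl r(1) r(1)])
    finally show "\<tau> (r `` {x}) \<subseteq> r `` {f x}" .
  qed
  have image_sub: "f ` D \<subseteq> \<tau> D" if "D \<in> X // r" for D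
    using that image_class \<tau>_class by (auto elim!: quotientE)
  have "\<tau> ` (X // r) \<subseteq> X // r"
    using \<tau>_class f(2) by (auto elim!: quotientE intro!: quotientI)
  moreover have "inj_on \<tau> (X // r)"
  proof (rule inj_onI)
    fix D D' assume "D \<in> X // r" "D' \<in> X // r" "\<tau> D = \<tau> D'"
    then obtain x y where "x \<in> X" "y \<in> X" "D = r `` {x}" "D' = r `` {y}" "r `` {f x} = r `` {f y}"
      using \<tau>_class by (auto elim!: quotientE)
    then have "(f x, f y) \<in> r" using f(2) eq_equiv_class_iff[OF r(1)] by blast
    then show "D = D'"
      using reflects \<open>x \<in> X\<close> \<open>y \<in> X\<close> \<open>D = _\<close> \<open>D' = _\<close> r(1) by (simp add: equiv_class_eq)
  qed
  moreover have lepoll_\<tau>: "D \<lesssim> \<tau> D" if "D \<in> X // r" for D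
    unfolding lepoll_def using image_sub[OF that] f(1) Union_quotient[OF r(1)] that
    by (blast intro: inj_on_subset)
  ultimately obtain D where D: "D \<in> X // r" "\<tau> D = C"
    using endo_inj_surj[OF r(2)] C by (metis imageE)
  have "C \<lesssim> D"
    using lepoll_reverse_if_finite_permutation[OF r(2) \<open>inj_on \<tau> _\<close> \<open>\<tau> ` _ \<subseteq> _\<close> lepoll_\<tau> D(1)] D(2) by simp
  also have "D \<lesssim> C \<inter> f ` X"
    unfolding lepoll_def using image_sub[OF D(1)] D f(1) Union_quotient[OF r(1)]
    by (blast intro: inj_on_subset)
  finally show ?thesis .
qed

section \<open>Isomorphisms of relational structures\<close>

lemma restr_rel_restr_rel [simp]: "restr_rel (restr_rel \<rho> X) Y = restr_rel \<rho> (X \<inter> Y)"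
  unfolding restr_rel_def by auto

lemma struct_iso_refl: "struct_iso n X \<rho> X \<rho>"
  unfolding struct_iso_def struct_iso_by_def by (rule exI[of _ id]) auto

lemma struct_iso_by_inv:
  assumes "struct_iso_by f n X \<rho> Y \<sigma>"
  shows "struct_iso_by (inv_into X f) n Y \<sigma> X \<rho>"
proof -
  have f: "bij_betw f X Y"
    and rel: "\<And>i xs. length xs = n i \<Longrightarrow> set xs \<subseteq> X \<Longrightarrow> xs \<in> \<rho> i \<longleftrightarrow> map f xs \<in> \<sigma> i"
    using assms unfolding struct_iso_by_def by auto
  have g: "bij_betw (inv_into X f) Y X" using f by (rule bij_betw_inv_into)
  show ?thesis unfolding struct_iso_by_def
  proof (intro conjI g allI impI)
    fix i ys assume ys: "length ys = n i \<and> set ys \<subseteq> Y"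
    have "set (map (inv_into X f) ys) \<subseteq> X" using ys g by (auto simp: bij_betw_def)
    moreover have "map f (map (inv_into X f) ys) = ys"
      using ys f by (auto simp: bij_betw_def f_inv_into_f intro!: map_idI)
    ultimately show "ys \<in> \<sigma> i \<longleftrightarrow> map (inv_into X f) ys \<in> \<rho> i"
      using rel ys by (metis length_map)
  qed
qed

lemma struct_iso_sym: "struct_iso n X \<rho> Y \<sigma> \<Longrightarrow> struct_iso n Y \<sigma> X \<rho>"
  unfolding struct_iso_def using struct_iso_by_inv by blast

lemma struct_iso_by_comp:
  assumes f: "struct_iso_by f n X \<rho> Y \<sigma>" and g: "struct_iso_by g n Y \<sigma> Z \<tau>"
  shows "struct_iso_by (g \<circ> f) n X \<rho> Z \<tau>"
  unfolding struct_iso_by_def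
proof (intro conjI allI impI)
  show "bij_betw (g \<circ> f) X Z"
    using f g unfolding struct_iso_by_def by (blast intro: bij_betw_trans)
  fix i xs assume xs: "length xs = n i \<and> set xs \<subseteq> X"
  then have "set (map f xs) \<subseteq> Y" using f by (auto simp: struct_iso_by_def bij_betw_def)
  then show "xs \<in> \<rho> i \<longleftrightarrow> map (g \<circ> f) xs \<in> \<tau> i"
    using xs f g unfolding struct_iso_by_def by simp
qed

lemma struct_iso_trans:
  "struct_iso n X \<rho> Y \<sigma> \<Longrightarrow> struct_iso n Y \<sigma> Z \<tau> \<Longrightarrow> struct_iso n X \<rho> Z \<tau>"
  unfolding struct_iso_def using struct_iso_by_comp by blast

lemma struct_iso_by_restr:
  assumes f: "struct_iso_by f n X \<rho> Y \<sigma>" and "F \<subseteq> X"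
  shows "struct_iso_by f n F (restr_rel \<rho> F) (f ` F) (restr_rel \<sigma> (f ` F))"
  unfolding struct_iso_by_def
proof (intro conjI allI impI)
  show "bij_betw f F (f ` F)"
    using f \<open>F \<subseteq> X\<close> unfolding struct_iso_by_def by (meson bij_betw_def inj_on_subset inj_on_imp_bij_betw)
  fix i xs assume "length xs = n i \<and> set xs \<subseteq> F"
  then show "xs \<in> restr_rel \<rho> F i \<longleftrightarrow> map f xs \<in> restr_rel \<sigma> (f ` F) i"
    using f \<open>F \<subseteq> X\<close> unfolding struct_iso_by_def restr_rel_def by auto
qed

section \<open>The canonical decomposition\<close>

abbreviation restr_iso :: "('i \<Rightarrow> nat) \<Rightarrow> ('i \<Rightarrow> 'a list set) \<Rightarrow> 'a set \<Rightarrow> 'a set \<Rightarrow> bool" where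
  "restr_iso n \<rho> F F' \<equiv> struct_iso n F (restr_rel \<rho> F) F' (restr_rel \<rho> F')"

lemma equiv_RD:
  "equiv_R n V \<rho> x y \<Longrightarrow> finite F \<Longrightarrow> F \<subseteq> V - {x, y} \<Longrightarrow> restr_iso n \<rho> (F \<union> {x}) (F \<union> {y})"
  unfolding equiv_R_def by blast

lemma equiv_R_refl: "equiv_R n V \<rho> x x"
  unfolding equiv_R_def using struct_iso_refl by blast

lemma equiv_R_sym:
  assumes "equiv_R n V \<rho> x y"
  shows "equiv_R n V \<rho> y x"
  unfolding equiv_R_def
proof (intro allI impI)
  fix F assume "finite F \<and> F \<subseteq> V - {y, x}"
  then have "restr_iso n \<rho> (F \<union> {x}) (F \<union> {y})"
    using equiv_RD[OF assms] by (simp add: insert_commute)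
  then show "restr_iso n \<rho> (F \<union> {y}) (F \<union> {x})" by (rule struct_iso_sym)
qed

lemma equiv_R_trans:
  assumes xy: "equiv_R n V \<rho> x y" and yz: "equiv_R n V \<rho> y z" and "x \<in> V" "z \<in> V"
  shows "equiv_R n V \<rho> x z"
  unfolding equiv_R_def
proof (intro allI impI)
  fix F assume F: "finite F \<and> F \<subseteq> V - {x, z}"
  consider (same) "x = z" | (avoid) "y \<notin> F" | (inside) "y \<in> F" "x \<noteq> z" by blast
  then show "restr_iso n \<rho> (F \<union> {x}) (F \<union> {z})"
  proof cases
    case same
    then show ?thesis by (simp add: struct_iso_refl)
  next
    case avoid
    then have "restr_iso n \<rho> (F \<union> {x}) (F \<union> {y})" "restr_iso n \<rho> (F \<union> {y}) (F \<union> {z})"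
      using equiv_RD[OF xy] equiv_RD[OF yz] F by auto
    then show ?thesis by (rule struct_iso_trans)
  next
    case inside
    \<comment> \<open>y is part of the context, so pass through F - {y} \<union> {x, z}\<close>
    define G where "G = F - {y}"
    have FG: "(G \<union> {x}) \<union> {y} = F \<union> {x}" "(G \<union> {z}) \<union> {y} = F \<union> {z}"
      "(G \<union> {x}) \<union> {z} = (G \<union> {z}) \<union> {x}"
      using inside unfolding G_def by auto
    have "finite G" "G \<union> {x} \<subseteq> V - {y, z}" "G \<union> {z} \<subseteq> V - {x, y}"
      using F inside \<open>x \<in> V\<close> \<open>z \<in> V\<close> unfolding G_def by auto
    then have "restr_iso n \<rho> ((G \<union> {x}) \<union> {y}) ((G \<union> {x}) \<union> {z})"
      and "restr_iso n \<rho> ((G \<union> {z}) \<union> {x}) ((G \<union> {z}) \<union> {y})"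
      using equiv_RD[OF yz, of "G \<union> {x}"] equiv_RD[OF xy, of "G \<union> {z}"] by simp_all
    then have "restr_iso n \<rho> (F \<union> {x}) ((G \<union> {z}) \<union> {x})" "restr_iso n \<rho> ((G \<union> {z}) \<union> {x}) (F \<union> {z})"
      by (simp_all only: FG)
    then show ?thesis by (rule struct_iso_trans)
  qed
qed

definition equiv_R_rel :: "('i \<Rightarrow> nat) \<Rightarrow> 'a set \<Rightarrow> ('i \<Rightarrow> 'a list set) \<Rightarrow> ('a \<times> 'a) set" where
  "equiv_R_rel n V \<rho> = {(x, y). x \<in> V \<and> y \<in> V \<and> equiv_R n V \<rho> x y}"

lemma canonical_decomp_eq_quotient: "canonical_decomp n V \<rho> = V // equiv_R_rel n V \<rho>"
  unfolding canonical_decomp_def equiv_R_rel_def ..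

lemma equiv_equiv_R_rel: "equiv V (equiv_R_rel n V \<rho>)"
  unfolding equiv_R_rel_def
  by (rule equivI) (auto simp: refl_on_def sym_def trans_def intro: equiv_R_refl equiv_R_sym equiv_R_trans)

lemma equiv_R_restr:
  assumes "equiv_R n V \<rho> x y" "A \<subseteq> V" "x \<in> A" "y \<in> A"
  shows "equiv_R n A (restr_rel \<rho> A) x y"
  unfolding equiv_R_def
proof (intro allI impI)
  fix F assume F: "finite F \<and> F \<subseteq> A - {x, y}"
  then have "restr_iso n \<rho> (F \<union> {x}) (F \<union> {y})"
    using equiv_RD[OF assms(1)] assms(2) by auto
  moreover have "A \<inter> (F \<union> {x}) = F \<union> {x}" "A \<inter> (F \<union> {y}) = F \<union> {y}" using F assms by auto
  ultimately show "restr_iso n (restr_rel \<rho> A) (F \<union> {x}) (F \<union> {y})" by simp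
qed

lemma Restr_equiv_R_rel_subset:
  "A \<subseteq> V \<Longrightarrow> Restr (equiv_R_rel n V \<rho>) A \<subseteq> equiv_R_rel n A (restr_rel \<rho> A)"
  unfolding equiv_R_rel_def by (auto intro: equiv_R_restr)

lemma equiv_R_image_if_struct_iso_by:
  assumes f: "struct_iso_by f n X \<rho> Y \<sigma>" and "x \<in> X" "y \<in> X" and xy: "equiv_R n X \<rho> x y"
  shows "equiv_R n Y \<sigma> (f x) (f y)"
  unfolding equiv_R_def
proof (intro allI impI)
  have f_bij: "bij_betw f X Y" using f unfolding struct_iso_by_def by auto
  fix F' assume F': "finite F' \<and> F' \<subseteq> Y - {f x, f y}"
  define F where "F = {z \<in> X. f z \<in> F'}"
  have F: "F \<subseteq> X - {x, y}" "f ` F = F'" using F' f_bij unfolding F_def bij_betw_def by auto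
  then have "finite F"
    using F' finite_imageD inj_on_subset[OF bij_betw_imp_inj_on[OF f_bij]] by (metis Diff_subset subset_trans)
  then have "restr_iso n \<rho> (F \<union> {x}) (F \<union> {y})" using equiv_RD[OF xy] F by blast
  moreover have transport:
    "struct_iso n (F \<union> {z}) (restr_rel \<rho> (F \<union> {z})) (F' \<union> {f z}) (restr_rel \<sigma> (F' \<union> {f z}))"
    if "z \<in> X" for z
    using struct_iso_by_restr[OF f, of "F \<union> {z}"] F that unfolding struct_iso_def by auto
  ultimately show "restr_iso n \<sigma> (F' \<union> {f x}) (F' \<union> {f y})"
    using transport[OF \<open>x \<in> X\<close>] transport[OF \<open>y \<in> X\<close>] by (meson struct_iso_sym struct_iso_trans)
qed

lemma equiv_R_rel_image_iff:
  assumes f: "struct_iso_by f n X \<rho> Y \<sigma>" and "x \<in> X" "y \<in> X"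
  shows "(f x, f y) \<in> equiv_R_rel n Y \<sigma> \<longleftrightarrow> (x, y) \<in> equiv_R_rel n X \<rho>"
proof -
  have f_bij: "bij_betw f X Y" using f unfolding struct_iso_by_def by auto
  then have "f x \<in> Y" "f y \<in> Y" "inv_into X f (f x) = x" "inv_into X f (f y) = y"
    using \<open>x \<in> X\<close> \<open>y \<in> X\<close> by (auto simp: bij_betw_def)
  then show ?thesis
    using equiv_R_image_if_struct_iso_by[OF f \<open>x \<in> X\<close> \<open>y \<in> X\<close>]
      equiv_R_image_if_struct_iso_by[OF struct_iso_by_inv[OF f], of "f x" "f y"] \<open>x \<in> X\<close> \<open>y \<in> X\<close>
    unfolding equiv_R_rel_def by auto
qed

lemma monomorphic_decomp_block_subset:
  assumes P: "monomorphic_decomp n V \<rho> P" and "B \<in> P"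
  shows "B \<times> B \<subseteq> equiv_R_rel n V \<rho>"
proof clarify
  fix x y assume "x \<in> B" "y \<in> B"
  have cover: "\<Union>P = V" and disj: "\<And>B'. B' \<in> P \<Longrightarrow> B' \<noteq> B \<Longrightarrow> B \<inter> B' = {}"
    and mono: "\<And>F F'. finite F \<Longrightarrow> finite F' \<Longrightarrow> F \<subseteq> V \<Longrightarrow> F' \<subseteq> V \<Longrightarrow>
        (\<forall>B\<in>P. card (F \<inter> B) = card (F' \<inter> B)) \<Longrightarrow> restr_iso n \<rho> F F'"
    using P \<open>B \<in> P\<close> unfolding monomorphic_decomp_def by blast+
  have "equiv_R n V \<rho> x y"
    unfolding equiv_R_def
  proof (intro allI impI)
    fix F assume F: "finite F \<and> F \<subseteq> V - {x, y}"
    have "card ((F \<union> {x}) \<inter> B') = card ((F \<union> {y}) \<inter> B')" if "B' \<in> P" for B'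
    proof (cases "B' = B")
      case True
      moreover have "x \<notin> F" "y \<notin> F" using F by auto
      ultimately show ?thesis using F \<open>x \<in> B\<close> \<open>y \<in> B\<close> by (simp add: Int_insert_left card_insert_if)
    next
      case False
      then have "x \<notin> B'" "y \<notin> B'" using disj[OF that] \<open>x \<in> B\<close> \<open>y \<in> B\<close> by auto
      then show ?thesis by (simp add: Int_insert_left)
    qed
    moreover have "x \<in> V" "y \<in> V" using cover \<open>B \<in> P\<close> \<open>x \<in> B\<close> \<open>y \<in> B\<close> by auto
    ultimately show "restr_iso n \<rho> (F \<union> {x}) (F \<union> {y})"
      using F by (intro mono) auto
  qed
  then show "(x, y) \<in> equiv_R_rel n V \<rho>"
    using cover \<open>B \<in> P\<close> \<open>x \<in> B\<close> \<open>y \<in> B\<close> unfolding equiv_R_rel_def by blast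
qed

lemma finite_canonical_decomp:
  assumes "monomorphic_decomp n V \<rho> P" "finite P"
  shows "finite (canonical_decomp n V \<rho>)"
  unfolding canonical_decomp_eq_quotient
proof (rule finite_quotient_if_blocks_in_classes[OF equiv_equiv_R_rel])
  show "\<Union>P = V" using assms(1) by (simp add: monomorphic_decomp_def)
qed (use assms(2) monomorphic_decomp_block_subset[OF assms(1)] in auto)

lemma monomorphic_decomp_restr:
  assumes P: "monomorphic_decomp n V \<rho> P" and "A \<subseteq> V"
  shows "monomorphic_decomp n A (restr_rel \<rho> A) ((\<lambda>B. A \<inter> B) ` P - {{}})"
proof -
  have cover: "\<Union>P = V" and disj: "\<forall>B\<in>P. \<forall>B'\<in>P. B \<noteq> B' \<longrightarrow> B \<inter> B' = {}"
    and mono: "\<And>F F'. finite F \<Longrightarrow> finite F' \<Longrightarrow> F \<subseteq> V \<Longrightarrow> F' \<subseteq> V \<Longrightarrow>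
        (\<forall>B\<in>P. card (F \<inter> B) = card (F' \<inter> B)) \<Longrightarrow> restr_iso n \<rho> F F'"
    using P unfolding monomorphic_decomp_def by blast+
  have counts: "\<forall>B\<in>P. card (F \<inter> B) = card (F' \<inter> B)"
    if "F \<subseteq> A" "F' \<subseteq> A" "\<forall>B\<in>(\<lambda>B. A \<inter> B) ` P - {{}}. card (F \<inter> B) = card (F' \<inter> B)" for F F'
  proof
    fix B assume "B \<in> P"
    have "F \<inter> B = F \<inter> (A \<inter> B)" "F' \<inter> B = F' \<inter> (A \<inter> B)" using that(1,2) by auto
    then show "card (F \<inter> B) = card (F' \<inter> B)" using that(3) \<open>B \<in> P\<close> by (cases "A \<inter> B = {}") auto
  qed
  show ?thesis unfolding monomorphic_decomp_def
  proof (intro conjI allI impI)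
    show "\<Union> ((\<inter>) A ` P - {{}}) = A" using cover \<open>A \<subseteq> V\<close> by blast
    show "{} \<notin> (\<inter>) A ` P - {{}}" by blast
    show "\<forall>B\<in>(\<inter>) A ` P - {{}}. \<forall>B'\<in>(\<inter>) A ` P - {{}}. B \<noteq> B' \<longrightarrow> B \<inter> B' = {}"
      using disj by blast
    fix F F' assume h: "finite F \<and> finite F' \<and> F \<subseteq> A \<and> F' \<subseteq> A \<and>
       (\<forall>B\<in>(\<inter>) A ` P - {{}}. card (F \<inter> B) = card (F' \<inter> B))"
    then have "restr_iso n \<rho> F F'" using mono counts \<open>A \<subseteq> V\<close> by (meson subset_trans)
    moreover have "A \<inter> F = F" "A \<inter> F' = F'" using h by auto
    ultimately show "restr_iso n (restr_rel \<rho> A) F F'" by simp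
  qed
qed

lemma canonical_decomp_restr_if_self_embedding:
  assumes "A \<subseteq> V" "B \<subseteq> A" and f: "struct_iso_by f n V \<rho> B (restr_rel \<rho> B)"
    and fin: "finite (canonical_decomp n V \<rho>)"
  shows "equiv_R_rel n B (restr_rel \<rho> B) = Restr (equiv_R_rel n V \<rho>) B"
    and "C \<in> canonical_decomp n V \<rho> \<Longrightarrow> A \<inter> C \<in> canonical_decomp n A (restr_rel \<rho> A)"
proof -
  define rV rA rB
    where "rV = equiv_R_rel n V \<rho>" and "rA = equiv_R_rel n A (restr_rel \<rho> A)"
      and "rB = equiv_R_rel n B (restr_rel \<rho> B)"
  have equivs: "equiv V rV" "equiv A rA" "equiv B rB" unfolding rV_def rA_def rB_def by (rule equiv_equiv_R_rel)+
  have finV: "finite (V // rV)" using fin unfolding rV_def canonical_decomp_eq_quotient .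
  have "Restr rV A \<subseteq> rA" unfolding rV_def rA_def using \<open>A \<subseteq> V\<close> by (rule Restr_equiv_R_rel_subset)
  note V_A = card_quotient_le[OF equivs(1,2) \<open>A \<subseteq> V\<close> this finV]
    quotient_Int_if_card_quotient_eq[OF equivs(1,2) \<open>A \<subseteq> V\<close> this finV]
  have "Restr rA B \<subseteq> rB"
    using Restr_equiv_R_rel_subset[OF \<open>B \<subseteq> A\<close>, of n "restr_rel \<rho> A"] \<open>B \<subseteq> A\<close>
    unfolding rA_def rB_def by (simp add: Int_absorb1)
  note A_B = card_quotient_le[OF equivs(2,3) \<open>B \<subseteq> A\<close> this V_A(1)]
    quotient_Int_if_card_quotient_eq[OF equivs(2,3) \<open>B \<subseteq> A\<close> this V_A(1)]
  \<comment> \<open>the chain of inequalities closes up because R|B is isomorphic to R\<close>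
  have "card (B // rB) = card (V // rV)"
    using f equivs(1,3) equiv_R_rel_image_iff[OF f]
    unfolding rV_def rB_def struct_iso_by_def by (intro card_quotient_eq_if_bij_betw) auto
  then have "card (A // rA) = card (V // rV)" "card (B // rB) = card (A // rA)"
    using V_A(2) A_B(2) by linarith+
  then show "rB = Restr rV B" "C \<in> canonical_decomp n V \<rho> \<Longrightarrow> A \<inter> C \<in> canonical_decomp n A (restr_rel \<rho> A)"
    using V_A(3,4) A_B(3) \<open>B \<subseteq> A\<close> unfolding rV_def rA_def canonical_decomp_eq_quotient by auto
qed

lemma canonical_class_eqpoll_Int_if_self_embedding:
  assumes "A \<subseteq> V" "B \<subseteq> A" and f: "struct_iso_by f n V \<rho> B (restr_rel \<rho> B)"
    and fin: "finite (canonical_decomp n V \<rho>)" and C: "C \<in> canonical_decomp n V \<rho>"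
  shows "A \<inter> C \<approx> C"
proof -
  have f_bij: "bij_betw f V B" using f unfolding struct_iso_by_def by blast
  have reflects: "(f x, f y) \<in> equiv_R_rel n V \<rho> \<longleftrightarrow> (x, y) \<in> equiv_R_rel n V \<rho>"
    if "x \<in> V" "y \<in> V" for x y
  proof -
    have "f x \<in> B" "f y \<in> B" using f_bij that by (auto simp: bij_betw_def)
    then show ?thesis
      using equiv_R_rel_image_iff[OF f that] canonical_decomp_restr_if_self_embedding(1)[OF assms(1,2) f fin]
      by auto
  qed
  have "C \<lesssim> C \<inter> f ` V"
    using fin C f_bij \<open>A \<subseteq> V\<close> \<open>B \<subseteq> A\<close> reflects unfolding canonical_decomp_eq_quotient bij_betw_def
    by (intro class_lepoll_Int_image[OF equiv_equiv_R_rel]) auto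
  also have "C \<inter> f ` V \<subseteq> A \<inter> C" using f_bij \<open>B \<subseteq> A\<close> by (auto simp: bij_betw_def)
  then have "C \<inter> f ` V \<lesssim> A \<inter> C" by (rule subset_imp_lepoll)
  finally show ?thesis by (simp add: lepoll_antisym subset_imp_lepoll)
qed

theorem proposition4p3:
  fixes V :: "'a set" and \<rho> :: "'i \<Rightarrow> 'a list set" and n :: "'i \<Rightarrow> nat" and A :: "'a set"
  assumes "rel_struct V \<rho> n" and "A \<subseteq> V"
  shows "(\<forall>P. monomorphic_decomp n V \<rho> P \<longrightarrow>
            monomorphic_decomp n A (restr_rel \<rho> A) ((\<lambda>B. A \<inter> B) ` P - {{}}))
       \<and> ((\<exists>P. monomorphic_decomp n V \<rho> P \<and> finite P) \<and> struct_embeds n V \<rho> A (restr_rel \<rho> A)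
            \<longrightarrow> (\<forall>C \<in> canonical_decomp n V \<rho>.
                   A \<inter> C \<in> canonical_decomp n A (restr_rel \<rho> A) \<and> A \<inter> C \<approx> C))"
proof (intro conjI allI impI ballI)
  fix P assume "monomorphic_decomp n V \<rho> P"
  then show "monomorphic_decomp n A (restr_rel \<rho> A) ((\<lambda>B. A \<inter> B) ` P - {{}})"
    using \<open>A \<subseteq> V\<close> by (rule monomorphic_decomp_restr)
next
  fix C assume hyps: "(\<exists>P. monomorphic_decomp n V \<rho> P \<and> finite P) \<and> struct_embeds n V \<rho> A (restr_rel \<rho> A)"
    and C: "C \<in> canonical_decomp n V \<rho>"
  then have fin: "finite (canonical_decomp n V \<rho>)" using finite_canonical_decomp by blast
  obtain B f where "B \<subseteq> A" and f: "struct_iso_by f n V \<rho> B (restr_rel \<rho> B)"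
    using hyps unfolding struct_embeds_def struct_iso_def by (auto simp: Int_absorb1)
  show "A \<inter> C \<in> canonical_decomp n A (restr_rel \<rho> A)"
    using canonical_decomp_restr_if_self_embedding(2)[OF \<open>A \<subseteq> V\<close> \<open>B \<subseteq> A\<close> f fin C] .
  show "A \<inter> C \<approx> C"
    using canonical_class_eqpoll_Int_if_self_embedding[OF \<open>A \<subseteq> V\<close> \<open>B \<subseteq> A\<close> f fin C] .
qed

end
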